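(* Let $m\ge 2$ and let $\mu\in C^\infty(\mathbb{R}^d;\mathbb{R})$ satisfy $\sup_{x\in\mathbb{R}^d}\langle x\rangle^{|\alpha|-m}|\partial^\alpha\mu(x)|<\infty$ for every multi-index $\alpha\in\mathbb{N}^d$. Let $F_\mu(x)=e^{2\pi i\mu(x)}$ and let $g \in C^\infty_{c}(\mathbb{R}^d)$ with $\mathrm{supp}(g) \subseteq \{ y \in \mathbb{R}^d : |y|\le 1\}$. Then: (i) $|V_g F_\mu (x,\xi)| \le \|g\|_{L^1}$ for all $(x,\xi) \in \mathbb{R}^{2d}$; (ii) there exists $A>0$ such that for every $N\ge 0$ there is $C>0$ (depending on $N$) with \[ |V_g F_\mu (x,\xi)| \le C \langle \xi - \nabla \mu(x) \rangle^{-N} \quad\text{whenever}\quad |\xi-\nabla \mu(x)| \ge A |x|^{m-2}. \]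
   Context: $\langle x\rangle=(1+|x|^2)^{1/2}$. The short-time Fourier transform of $f\in\mathcal{S}'(\mathbb{R}^d)$ with window $g\in\mathcal{S}(\mathbb{R}^d)\setminus\{0\}$ is $V_gf(x,\xi)=\int_{\mathbb{R}^d} e^{-2\pi i\xi\cdot y}f(y)\overline{g(y-x)}\,dy$. *)

theory Defs
  imports "HOL-Analysis.Analysis"
begin

definition partial_deriv :: "'n::finite \<Rightarrow> (real^'n \<Rightarrow> 'a::real_normed_vector) \<Rightarrow> real^'n \<Rightarrow> 'a" where
  "partial_deriv i f x = frechet_derivative f (at x) (axis i 1)"

text \<open>Iterated partial derivatives along a list of directions; a multi-index alpha
  corresponds to any list containing each i exactly alpha(i) times, |alpha| = length.\<close>
fun pderivs :: "'n::finite list \<Rightarrow> (real^'n \<Rightarrow> 'a::real_normed_vector) \<Rightarrow> real^'n \<Rightarrow> 'a" where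
  "pderivs [] f = f"
| "pderivs (i # is) f = partial_deriv i (pderivs is f)"

definition smooth_fun :: "(real^'n::finite \<Rightarrow> 'a::real_normed_vector) \<Rightarrow> bool" where
  "smooth_fun f \<longleftrightarrow> (\<forall>is x. pderivs is f differentiable (at x))"

definition japanese :: "real^'n::finite \<Rightarrow> real" where
  "japanese x = sqrt (1 + (norm x)\<^sup>2)"

definition grad :: "(real^'n::finite \<Rightarrow> real) \<Rightarrow> real^'n \<Rightarrow> real^'n" where
  "grad f x = (\<chi> i. partial_deriv i f x)"

definition stft :: "(real^'n::finite \<Rightarrow> complex) \<Rightarrow> (real^'n \<Rightarrow> complex) \<Rightarrow> real^'n \<Rightarrow> real^'n \<Rightarrow> complex" where
  "stft g f x \<xi> = (LINT y|lborel. exp (- 2 * pi * \<i> * complex_of_real (\<xi> \<bullet> y)) * f y * cnj (g (y - x)))"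

text \<open>Real power with the convention 0^0 = 1 (Isabelle's powr has 0 powr 0 = 0).\<close>
definition rpow :: "real \<Rightarrow> real \<Rightarrow> real" where
  "rpow t a = (if t = 0 then (if a = 0 then 1 else 0) else t powr a)"

end

theory Submission
  imports Defs
begin

(* Part (i) is the triangle inequality, since |F_mu| = 1.
   For part (ii) put eta = xi - grad mu(x) and pick a coordinate k with |eta_k| >= |eta| / d.
   The second derivatives of mu are O(<x>^(m-2)), so as soon as |eta| >= L <x>^(m-2) the phase
   derivative d_k mu(y) - xi_k stays between |eta| / (2d) and 2 |eta| on the ball of radius 2
   around x, which contains the support of the window g(. - x). There we integrate by parts
   j times along e_k against the oscillating factor exp(2 pi i (mu(y) - xi . y)), gaining a
   factor 1 / |eta| each time. The integrands produced are polynomials in the derivatives of g,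
   in the derivatives of d_k mu divided by |eta| (bounded, because all higher derivatives of mu
   are O(<x>^(m-2)) as well) and in the inverse of the normalised phase derivative, so they are
   bounded uniformly in x and xi. Since <x> <= 2 max(1, |x|), the hypothesis
   |eta| >= A |x|^(m-2) with A large enough gives |eta| >= L <x>^(m-2) whenever |eta| >= A;
   for |eta| < A part (i) already suffices. *)

section \<open>Smooth functions and their derivatives\<close>

lemma smooth_fun_differentiable:
  "smooth_fun f \<Longrightarrow> pderivs js f differentiable (at x)"
  unfolding smooth_fun_def by blast

lemma smooth_fun_continuous_on:
  "smooth_fun f \<Longrightarrow> continuous_on S (pderivs js f)"
  by (meson smooth_fun_differentiable continuous_at_imp_continuous_on
      differentiable_imp_continuous_within)

lemma pderivs_has_vector_derivative_axis:
  fixes f :: "real^'n::finite \<Rightarrow> 'a::real_normed_vector"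
  assumes "smooth_fun f"
  shows "((\<lambda>t. pderivs js f (y + t *\<^sub>R axis k 1)) has_vector_derivative pderivs (k # js) f y) (at 0)"
proof -
  let ?F = "frechet_derivative (pderivs js f) (at y)"
  have F: "(pderivs js f has_derivative ?F) (at (y + 0 *\<^sub>R axis k 1))"
    using smooth_fun_differentiable[OF assms, THEN frechet_derivative_works[THEN iffD1]] by simp
  have "((\<lambda>t. y + t *\<^sub>R axis k 1) has_derivative (\<lambda>t. t *\<^sub>R axis k (1::real))) (at 0)"
    by (auto intro!: derivative_eq_intros)
  from has_derivative_compose[OF this F]
  have "((\<lambda>t. pderivs js f (y + t *\<^sub>R axis k 1)) has_derivative (\<lambda>t. ?F (t *\<^sub>R axis k 1))) (at 0)"
    by (simp add: o_def)
  moreover have "linear ?F"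
    using F has_derivative_linear by blast
  ultimately show ?thesis
    by (simp add: has_vector_derivative_def linear_scale partial_deriv_def)
qed

lemma pderivs_eq_0_outside:
  fixes f :: "real^'n::finite \<Rightarrow> 'a::real_normed_vector"
  assumes "\<And>y. f y \<noteq> 0 \<Longrightarrow> norm y \<le> R" and "norm y > R"
  shows "pderivs js f y = 0"
  using assms(2)
proof (induction js arbitrary: y)
  case Nil
  then show ?case using assms(1) by force
next
  case (Cons i js)
  have "((\<lambda>_. 0) has_derivative (\<lambda>_. 0)) (at y)"
    by simp
  then have "(pderivs js f has_derivative (\<lambda>_. 0)) (at y)"
    by (rule has_derivative_transform_within_open[where s="- cball 0 R"])
       (use Cons in \<open>auto simp: dist_norm\<close>)
  then show ?case
    by (simp add: partial_deriv_def frechet_derivative_at[symmetric])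
qed

lemma bounded_vanishing_outside_cball:
  fixes f :: "'a::euclidean_space \<Rightarrow> 'b::real_normed_vector"
  assumes "continuous_on UNIV f" and "\<And>y. y \<notin> cball c R \<Longrightarrow> f y = 0"
  shows "\<exists>M\<ge>0. \<forall>y. norm (f y) \<le> M"
proof -
  have "compact (f ` cball c R)"
    using assms(1) by (intro compact_continuous_image) (auto intro: continuous_on_subset)
  then obtain M where M: "\<And>z. z \<in> f ` cball c R \<Longrightarrow> norm z \<le> M"
    using compact_imp_bounded bounded_iff by metis
  have "norm (f y) \<le> max M 0" for y
    using M[of "f y"] assms(2)[of y] by (cases "y \<in> cball c R") auto
  then show ?thesis
    by (metis max.cobounded2)
qed

lemma smooth_compact_support_pderivs_bounded:
  fixes f :: "real^'n::finite \<Rightarrow> 'a::real_normed_vector"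
  assumes "smooth_fun f" and "\<And>y. f y \<noteq> 0 \<Longrightarrow> norm y \<le> R"
  shows "\<exists>M. \<forall>y. norm (pderivs js f y) \<le> M"
proof -
  have "pderivs js f y = 0" if "y \<notin> cball 0 R" for y
    using pderivs_eq_0_outside[of f R y js] assms(2) that by (simp add: dist_norm)
  then show ?thesis
    using bounded_vanishing_outside_cball[OF smooth_fun_continuous_on[OF assms(1)]] by blast
qed

lemma bound_uniform_in_length:
  fixes F :: "'i::finite list \<Rightarrow> 'a \<Rightarrow> real"
  assumes "\<And>js. \<exists>B. \<forall>x. F js x \<le> B"
  shows "\<exists>B. (\<forall>n. 0 \<le> B n) \<and> (\<forall>js x. F js x \<le> B (length js))"
proof -
  obtain B0 where B0: "\<And>js x. F js x \<le> B0 js"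
    using assms by metis
  define B where "B n = Max (insert 0 (B0 ` {js. length js = n}))" for n
  have fin: "finite {js::'i list. length js = n}" for n
    using finite_lists_length_eq[of "UNIV :: 'i set" n] by simp
  have "F js x \<le> B (length js)" for js x
    unfolding B_def using fin by (intro order_trans[OF B0] Max_ge) auto
  moreover have "0 \<le> B n" for n
    unfolding B_def using fin by simp
  ultimately show ?thesis
    by blast
qed

section \<open>Integrals of derivatives of compactly supported functions\<close>

lemma lborel_integral_translate:
  fixes f :: "'a::euclidean_space \<Rightarrow> 'b::{banach, second_countable_topology}"
  assumes "f \<in> borel_measurable borel"
  shows "(LINT y|lborel. f (y + c)) = (LINT y|lborel. f y)"
proof -
  have "(LINT y|lborel. f y) = integral\<^sup>L (distr lborel borel ((+) c)) f"
    by (simp add: lborel_distr_plus)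
  also have "\<dots> = (LINT y|lborel. f (c + y))"
    using assms by (intro integral_distr) auto
  finally show ?thesis
    by (simp add: add.commute)
qed

lemma integrable_vanishing_outside_cball:
  fixes f :: "'a::euclidean_space \<Rightarrow> 'b::{banach, second_countable_topology}"
  assumes "continuous_on UNIV f" and "\<And>y. y \<notin> cball c R \<Longrightarrow> f y = 0"
  shows "integrable lborel f"
proof -
  have "integrable lborel (\<lambda>y. indicator (cball c R) y *\<^sub>R f y)"
    using assms(1) by (intro borel_integrable_compact) (auto intro: continuous_on_subset)
  moreover have "(\<lambda>y. indicator (cball c R) y *\<^sub>R f y) = f"
    using assms(2) by (auto simp: fun_eq_iff indicator_def)
  ultimately show ?thesis
    by simp
qed

lemma has_vector_derivative_at_0_sequentially:
  fixes g :: "real \<Rightarrow> 'b::real_normed_vector"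
  assumes "(g has_vector_derivative v) (at 0)"
  shows "(\<lambda>n. real (Suc n) *\<^sub>R (g (1 / real (Suc n)) - g 0)) \<longlonglongrightarrow> v"
proof -
  have "((\<lambda>h. norm (g (0 + h) - g 0 - h *\<^sub>R v) / norm h) \<longlongrightarrow> 0) (at 0)"
    using assms unfolding has_vector_derivative_def has_derivative_at by blast
  moreover have "filterlim (\<lambda>n. 1 / real (Suc n)) (at 0) sequentially"
    unfolding filterlim_at using LIMSEQ_inverse_real_of_nat by (auto simp: inverse_eq_divide)
  ultimately have "(\<lambda>n. norm (g (1 / real (Suc n)) - g 0 - (1 / real (Suc n)) *\<^sub>R v)
      / norm (1 / real (Suc n))) \<longlonglongrightarrow> 0"
    using filterlim_compose by fastforce
  moreover have "norm (g (1 / real (Suc n)) - g 0 - (1 / real (Suc n)) *\<^sub>R v) / norm (1 / real (Suc n))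
      = norm (real (Suc n) *\<^sub>R (g (1 / real (Suc n)) - g 0) - v)" for n
  proof -
    have "real (Suc n) *\<^sub>R (g (1 / real (Suc n)) - g 0) - v
        = real (Suc n) *\<^sub>R (g (1 / real (Suc n)) - g 0 - (1 / real (Suc n)) *\<^sub>R v)"
      by (simp add: algebra_simps)
    then show ?thesis
      by (simp add: divide_inverse)
  qed
  ultimately have "(\<lambda>n. norm (real (Suc n) *\<^sub>R (g (1 / real (Suc n)) - g 0) - v)) \<longlonglongrightarrow> 0"
    by simp
  then show ?thesis
    using tendsto_norm_zero_iff LIM_zero_cancel by blast
qed

lemma has_vector_derivative_along_line:
  fixes h h' :: "'a::real_normed_vector \<Rightarrow> 'b::real_normed_vector"
  assumes "\<And>y. ((\<lambda>t. h (y + t *\<^sub>R e)) has_vector_derivative h' y) (at 0)"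
  shows "((\<lambda>t. h (y + t *\<^sub>R e)) has_vector_derivative h' (y + t0 *\<^sub>R e)) (at t0)"
proof -
  have shift: "((\<lambda>t. t - t0) has_vector_derivative 1) (at t0)"
    by (auto intro!: derivative_eq_intros)
  have base: "((\<lambda>s. h ((y + t0 *\<^sub>R e) + s *\<^sub>R e)) has_vector_derivative h' (y + t0 *\<^sub>R e))
      (at ((\<lambda>t. t - t0) t0))"
    using assms[of "y + t0 *\<^sub>R e"] by simp
  have "(\<lambda>s. h ((y + t0 *\<^sub>R e) + s *\<^sub>R e)) \<circ> (\<lambda>t. t - t0) = (\<lambda>t. h (y + t *\<^sub>R e))"
    by (auto simp: fun_eq_iff algebra_simps)
  with vector_diff_chain_at[OF shift base] show ?thesis
    by simp
qed

lemma difference_along_line_le: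
  fixes h h' :: "'a::real_normed_vector \<Rightarrow> 'b::real_normed_vector"
  assumes "\<And>y. ((\<lambda>t. h (y + t *\<^sub>R e)) has_vector_derivative h' y) (at 0)"
    and "\<And>y. norm (h' y) \<le> M" and "0 \<le> t"
  shows "norm (h (y + t *\<^sub>R e) - h y) \<le> M * t"
proof -
  have "0 \<le> M"
    using order_trans[OF norm_ge_zero assms(2)] .
  have "norm (h (y + t *\<^sub>R e) - h (y + 0 *\<^sub>R e)) \<le> M * norm (t - 0)"
  proof (rule differentiable_bound[where S="{0..t}" and f="\<lambda>t. h (y + t *\<^sub>R e)"
        and f'="\<lambda>t s. s *\<^sub>R h' (y + t *\<^sub>R e)"])
    fix s assume "s \<in> {0..t}"
    show "((\<lambda>t. h (y + t *\<^sub>R e)) has_derivative (\<lambda>r. r *\<^sub>R h' (y + s *\<^sub>R e))) (at s within {0..t})"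
      using has_vector_derivative_along_line[OF assms(1), of y s]
      unfolding has_vector_derivative_def by (rule has_derivative_at_withinI)
    show "onorm (\<lambda>r. r *\<^sub>R h' (y + s *\<^sub>R e)) \<le> M"
      using assms(2) \<open>0 \<le> M\<close> by (intro onorm_bound) (auto simp: mult.commute[of M] intro!: mult_left_mono)
  qed (use assms(3) in auto)
  then show ?thesis
    using assms(3) by simp
qed

lemma difference_along_line_le_indicator:
  fixes h h' :: "'a::real_normed_vector \<Rightarrow> 'b::real_normed_vector"
  assumes der: "\<And>y. ((\<lambda>t. h (y + t *\<^sub>R e)) has_vector_derivative h' y) (at 0)"
    and M: "\<And>y. norm (h' y) \<le> M" and supp: "\<And>y. y \<notin> cball c R \<Longrightarrow> h y = 0"
    and t: "0 \<le> t" "t \<le> 1"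
  shows "norm (h (y + t *\<^sub>R e) - h y) \<le> M * t * indicator (cball c (R + norm e)) y"
proof (cases "y \<in> cball c (R + norm e)")
  case True
  then show ?thesis
    using difference_along_line_le[OF der M t(1)] by simp
next
  case False
  have "norm (t *\<^sub>R e) \<le> norm e"
    using t by (simp add: mult_left_le_one_le)
  then have "y + t *\<^sub>R e \<notin> cball c R"
    using False dist_triangle[of c y "y + t *\<^sub>R e"] by (auto simp: dist_norm)
  moreover have "y \<notin> cball c R"
    using False norm_ge_zero[of e] unfolding mem_cball by linarith
  ultimately show ?thesis
    using False supp by simp
qed

text \<open>The integral of a directional derivative vanishes: the difference quotients
  \<open>n (h (y + e/n) - h y)\<close> have integral zero by translation invariance of Lebesgue measure
  and converge dominatedly to \<open>h'\<close>.\<close>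

lemma integral_derivative_along_line_eq_0:
  fixes h h' :: "real^'n::finite \<Rightarrow> complex"
  assumes der: "\<And>y. ((\<lambda>t. h (y + t *\<^sub>R e)) has_vector_derivative h' y) (at 0)"
    and cont: "continuous_on UNIV h" "continuous_on UNIV h'"
    and supp: "\<And>y. y \<notin> cball c R \<Longrightarrow> h y = 0" "\<And>y. y \<notin> cball c R \<Longrightarrow> h' y = 0"
  shows "(LINT y|lborel. h' y) = 0"
proof -
  obtain M where M: "\<And>y. norm (h' y) \<le> M"
    using bounded_vanishing_outside_cball[OF cont(2) supp(2)] by blast
  define q where "q n y = real (Suc n) *\<^sub>R (h (y + (1 / real (Suc n)) *\<^sub>R e) - h y)" for n y
  define w where "w = (\<lambda>y. M * indicator (cball c (R + norm e)) y :: real)"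
  have shifted_integrable: "integrable lborel (\<lambda>y. h (y + t *\<^sub>R e))" for t
  proof (rule integrable_vanishing_outside_cball[of _ "c - t *\<^sub>R e" R])
    show "continuous_on UNIV (\<lambda>y. h (y + t *\<^sub>R e))"
      by (intro continuous_on_compose2[OF cont(1)]) (auto intro!: continuous_intros)
    show "h (y + t *\<^sub>R e) = 0" if "y \<notin> cball (c - t *\<^sub>R e) R" for y
      using that supp(1) by (auto simp: dist_norm algebra_simps)
  qed
  have integrable_h: "integrable lborel h"
    using shifted_integrable[of 0] by simp
  have "(LINT y|lborel. q n y) = 0" for n
  proof -
    have "(LINT y|lborel. h (y + (1 / real (Suc n)) *\<^sub>R e)) = (LINT y|lborel. h y)"
      using borel_measurable_continuous_onI[OF cont(1)] by (rule lborel_integral_translate)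
    then show ?thesis
      unfolding q_def using integrable_h shifted_integrable by simp
  qed
  moreover have "(\<lambda>n. LINT y|lborel. q n y) \<longlonglongrightarrow> (LINT y|lborel. h' y)"
  proof (rule integral_dominated_convergence[where w=w])
    show "h' \<in> borel_measurable lborel"
      using borel_measurable_continuous_onI[OF cont(2)] by simp
    show "q n \<in> borel_measurable lborel" for n
      using Bochner_Integration.integrable_diff[OF shifted_integrable integrable_h] unfolding q_def
      by (intro borel_measurable_integrable integrable_scaleR_right) auto
    show "integrable lborel w"
      unfolding w_def using emeasure_compact_finite[of "cball c (R + norm e)"]
      by (intro integrable_mult_right integrable_real_indicator) (auto simp: less_top)
    show "AE y in lborel. (\<lambda>n. q n y) \<longlonglongrightarrow> h' y"
      unfolding q_def using has_vector_derivative_at_0_sequentially[OF der]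
      by (intro AE_I2) simp
    show "AE y in lborel. norm (q n y) \<le> w y" for n
    proof (intro AE_I2)
      fix y
      let ?d = "h (y + (1 / real (Suc n)) *\<^sub>R e) - h y"
      have "norm ?d \<le> M * (1 / real (Suc n)) * indicator (cball c (R + norm e)) y"
        by (rule difference_along_line_le_indicator[OF der M supp(1)]) auto
      then have "real (Suc n) * norm ?d \<le> w y"
        unfolding w_def by (simp add: field_simps)
      then show "norm (q n y) \<le> w y"
        by (simp only: q_def norm_scaleR abs_of_nat)
    qed
  qed
  ultimately show ?thesis
    using LIMSEQ_unique by (simp add: LIMSEQ_const_iff)
qed

section \<open>Integration by parts against an oscillating factor\<close>

text \<open>The integrands produced by repeated integration by parts are polynomials in the derivatives
  \<open>G r\<close> of the window, the derivatives \<open>B r\<close> of the normalised phase derivative \<open>B 0\<close>, and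
  \<open>1 / B 0\<close>. Keeping them as syntax trees yields bounds that are uniform in all parameters.\<close>

datatype dexpr = Win nat | Phase nat | Inv_Phase | Const complex | Add dexpr dexpr | Mult dexpr dexpr

fun dexpr_eval :: "(nat \<Rightarrow> 'a \<Rightarrow> complex) \<Rightarrow> (nat \<Rightarrow> 'a \<Rightarrow> complex) \<Rightarrow> dexpr \<Rightarrow> 'a \<Rightarrow> complex" where
  "dexpr_eval G B (Win r) y = G r y"
| "dexpr_eval G B (Phase r) y = B r y"
| "dexpr_eval G B Inv_Phase y = inverse (B 0 y)"
| "dexpr_eval G B (Const c) y = c"
| "dexpr_eval G B (Add e f) y = dexpr_eval G B e y + dexpr_eval G B f y"
| "dexpr_eval G B (Mult e f) y = dexpr_eval G B e y * dexpr_eval G B f y"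

fun dexpr_deriv :: "dexpr \<Rightarrow> dexpr" where
  "dexpr_deriv (Win r) = Win (Suc r)"
| "dexpr_deriv (Phase r) = Phase (Suc r)"
| "dexpr_deriv Inv_Phase = Mult (Const (- 1)) (Mult (Phase 1) (Mult Inv_Phase Inv_Phase))"
| "dexpr_deriv (Const c) = Const 0"
| "dexpr_deriv (Add e f) = Add (dexpr_deriv e) (dexpr_deriv f)"
| "dexpr_deriv (Mult e f) = Add (Mult (dexpr_deriv e) f) (Mult e (dexpr_deriv f))"

fun window_divisible :: "dexpr \<Rightarrow> bool" where
  "window_divisible (Win r) = True"
| "window_divisible (Phase r) = False"
| "window_divisible Inv_Phase = False"
| "window_divisible (Const c) = (c = 0)"
| "window_divisible (Add e f) = (window_divisible e \<and> window_divisible f)"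
| "window_divisible (Mult e f) = (window_divisible e \<or> window_divisible f)"

fun dexpr_bound :: "(nat \<Rightarrow> real) \<Rightarrow> (nat \<Rightarrow> real) \<Rightarrow> real \<Rightarrow> dexpr \<Rightarrow> real" where
  "dexpr_bound CG CB c (Win r) = CG r"
| "dexpr_bound CG CB c (Phase r) = CB r"
| "dexpr_bound CG CB c Inv_Phase = 1 / c"
| "dexpr_bound CG CB c (Const a) = norm a"
| "dexpr_bound CG CB c (Add e f) = dexpr_bound CG CB c e + dexpr_bound CG CB c f"
| "dexpr_bound CG CB c (Mult e f) = dexpr_bound CG CB c e * dexpr_bound CG CB c f"

lemma window_divisible_dexpr_deriv: "window_divisible e \<Longrightarrow> window_divisible (dexpr_deriv e)"
  by (induction e) auto

lemma dexpr_eval_eq_0: "window_divisible e \<Longrightarrow> (\<And>r. G r y = 0) \<Longrightarrow> dexpr_eval G B e y = 0"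
  by (induction e) auto

lemma norm_dexpr_eval_le:
  assumes "\<And>r. norm (G r y) \<le> CG r" and "\<And>r. norm (B r y) \<le> CB r"
    and "c \<le> norm (B 0 y)" and "0 < c"
  shows "norm (dexpr_eval G B e y) \<le> dexpr_bound CG CB c e"
proof (induction e)
  case Inv_Phase
  have "norm (inverse (B 0 y)) = 1 / norm (B 0 y)"
    by (simp add: norm_inverse divide_inverse)
  also have "\<dots> \<le> 1 / c"
    using assms(3,4) by (intro divide_left_mono) (auto intro!: mult_pos_pos)
  finally show ?case
    by simp
next
  case (Add e f)
  then show ?case
    by (simp add: norm_triangle_le)
next
  case (Mult e f)
  then show ?case
    by (simp add: norm_mult mult_mono' order_trans[OF norm_ge_zero])
qed (use assms in auto)

lemma isCont_dexpr_eval: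
  assumes "\<And>r. isCont (G r) y" and "\<And>r. isCont (B r) y" and "B 0 y \<noteq> 0"
  shows "isCont (dexpr_eval G B e) y"
proof (induction e)
  case Inv_Phase
  show ?case
    using assms(2)[of 0] assms(3) by (simp add: continuous_at_within_inverse)
qed (use assms in \<open>auto intro: continuous_intros\<close>)

lemma dexpr_eval_has_vector_derivative:
  fixes e0 :: "'a::real_normed_vector"
  assumes "\<And>r. ((\<lambda>t. G r (y + t *\<^sub>R e0)) has_vector_derivative G (Suc r) y) (at 0)"
    and "\<And>r. ((\<lambda>t. B r (y + t *\<^sub>R e0)) has_vector_derivative B (Suc r) y) (at 0)"
    and "B 0 y \<noteq> 0"
  shows "((\<lambda>t. dexpr_eval G B e (y + t *\<^sub>R e0)) has_vector_derivative dexpr_eval G B (dexpr_deriv e) y) (at 0)"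
proof (induction e)
  case Inv_Phase
  have "((\<lambda>t. B 0 (y + t *\<^sub>R e0)) has_derivative (\<lambda>h. h *\<^sub>R B 1 y)) (at 0)"
    using assms(2)[of 0] by (simp add: has_vector_derivative_def)
  from has_derivative_compose[OF this has_derivative_inverse'[of "B 0 (y + 0 *\<^sub>R e0)" UNIV]]
  have "((\<lambda>t. inverse (B 0 (y + t *\<^sub>R e0))) has_derivative
      (\<lambda>h. - (inverse (B 0 y) * (h *\<^sub>R B 1 y) * inverse (B 0 y)))) (at 0)"
    using assms(3) by simp
  then have "((\<lambda>t. inverse (B 0 (y + t *\<^sub>R e0))) has_vector_derivative
      - (inverse (B 0 y) * B 1 y * inverse (B 0 y))) (at 0)"
    unfolding has_vector_derivative_def by (simp add: scaleR_conv_of_real mult_ac)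
  then show ?case
    by (simp add: algebra_simps)
next
  case (Add e f)
  then show ?case
    by (auto intro: derivative_eq_intros)
next
  case (Mult e f)
  then show ?case
    by (auto intro!: derivative_eq_intros simp: algebra_simps)
qed (use assms in auto)

text \<open>Up to the factor \<open>s\<close>, the transpose of the operator \<open>(2 \<pi> i s B 0)\<^sup>-\<^sup>1 \<partial>\<^sub>e\<close>, which
  fixes the oscillating factor \<open>u\<close>; each application therefore gains a factor \<open>1 / s\<close>.\<close>

definition ibp_transpose :: "dexpr \<Rightarrow> dexpr" where
  "ibp_transpose E = Mult (Const (- 1 / (2 * pi * \<i>))) (dexpr_deriv (Mult E Inv_Phase))"

lemma window_divisible_ibp_transpose_power: "window_divisible ((ibp_transpose ^^ j) (Win 0))"
  by (induction j) (auto simp: ibp_transpose_def intro!: window_divisible_dexpr_deriv)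

locale oscillatory_ibp =
  fixes u :: "real^'n::finite \<Rightarrow> complex" and G B :: "nat \<Rightarrow> real^'n \<Rightarrow> complex"
    and x e :: "real^'n" and s :: real
  assumes u_deriv: "\<And>y. ((\<lambda>t. u (y + t *\<^sub>R e)) has_vector_derivative
      u y * (2 * pi * \<i> * of_real s * B 0 y)) (at 0)"
    and u_cont: "continuous_on UNIV u"
    and G_deriv: "\<And>r y. ((\<lambda>t. G r (y + t *\<^sub>R e)) has_vector_derivative G (Suc r) y) (at 0)"
    and B_deriv: "\<And>r y. ((\<lambda>t. B r (y + t *\<^sub>R e)) has_vector_derivative B (Suc r) y) (at 0)"
    and G_cont: "\<And>r. continuous_on UNIV (G r)"
    and B_cont: "\<And>r. continuous_on UNIV (B r)"
    and G_support: "\<And>r y. y \<notin> cball x 1 \<Longrightarrow> G r y = 0"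
    and B_nonzero: "\<And>y. y \<in> ball x 2 \<Longrightarrow> B 0 y \<noteq> 0"
    and s_nonzero: "s \<noteq> 0"
begin

lemma dexpr_eval_eq_0_outside: "window_divisible E \<Longrightarrow> y \<notin> cball x 1 \<Longrightarrow> dexpr_eval G B E y = 0"
  by (rule dexpr_eval_eq_0) (auto simp: G_support)

lemma continuous_on_integrand:
  assumes "window_divisible E"
  shows "continuous_on UNIV (\<lambda>y. u y * dexpr_eval G B E y)"
proof -
  have "continuous_on (ball x 2) (\<lambda>y. u y * dexpr_eval G B E y)"
  proof (intro continuous_at_imp_continuous_on ballI)
    fix y assume "y \<in> ball x 2"
    then have "isCont (dexpr_eval G B E) y"
      using B_nonzero G_cont B_cont by (intro isCont_dexpr_eval) (auto simp: continuous_on_eq_continuous_at)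
    then show "isCont (\<lambda>y. u y * dexpr_eval G B E y) y"
      using u_cont by (auto intro!: continuous_intros simp: continuous_on_eq_continuous_at)
  qed
  moreover have "continuous_on (- cball x 1) (\<lambda>y. u y * dexpr_eval G B E y)"
    by (rule continuous_on_eq[where f="\<lambda>_. 0"]) (auto simp: dexpr_eval_eq_0_outside[OF assms])
  moreover have "ball x 2 \<union> - cball x 1 = UNIV"
    by auto
  ultimately show ?thesis
    using continuous_on_open_Un[of "ball x 2" "- cball x 1"] by auto
qed

lemma integrable_integrand: "window_divisible E \<Longrightarrow> integrable lborel (\<lambda>y. u y * dexpr_eval G B E y)"
  using integrable_vanishing_outside_cball[OF continuous_on_integrand, of E x 1]
    dexpr_eval_eq_0_outside by simp

lemma has_vector_derivative_integrand:
  assumes "window_divisible E"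
  shows "((\<lambda>t. u (y + t *\<^sub>R e) * dexpr_eval G B E (y + t *\<^sub>R e)) has_vector_derivative
      u y * (dexpr_eval G B (dexpr_deriv E) y + 2 * pi * \<i> * of_real s * B 0 y * dexpr_eval G B E y)) (at 0)"
proof (cases "y \<in> ball x 2")
  case True
  have "((\<lambda>t. dexpr_eval G B E (y + t *\<^sub>R e)) has_vector_derivative dexpr_eval G B (dexpr_deriv E) y) (at 0)"
    using G_deriv B_deriv B_nonzero[OF True] by (rule dexpr_eval_has_vector_derivative)
  from has_vector_derivative_mult[OF u_deriv[of y] this]
  show ?thesis
    by (simp add: algebra_simps)
next
  case False
  then have y: "y \<notin> cball x 1"
    by auto
  have "open ((\<lambda>t. y + t *\<^sub>R e) -` (- cball x 1))"
    by (intro open_vimage) (auto intro!: continuous_intros)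
  then have "((\<lambda>t. u (y + t *\<^sub>R e) * dexpr_eval G B E (y + t *\<^sub>R e)) has_vector_derivative 0) (at 0)"
    by (rule has_vector_derivative_transform_within_open[OF has_vector_derivative_const])
       (use y in \<open>auto simp: dexpr_eval_eq_0_outside[OF assms]\<close>)
  then show ?thesis
    using dexpr_eval_eq_0_outside[OF window_divisible_dexpr_deriv[OF assms] y]
      dexpr_eval_eq_0_outside[OF assms y] by simp
qed

lemma integral_ibp_transpose:
  assumes "window_divisible E"
  shows "(LINT y|lborel. u y * dexpr_eval G B E y)
       = (1 / s) * (LINT y|lborel. u y * dexpr_eval G B (ibp_transpose E) y)"
proof -
  let ?E = "Mult E Inv_Phase" and ?c = "1 / (2 * pi * \<i> * of_real s)"
  define h where "h y = u y * dexpr_eval G B ?E y * ?c" for y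
  define h' where "h' y = u y * dexpr_eval G B E y
      - u y * dexpr_eval G B (ibp_transpose E) y * (1 / of_real s)" for y
  have divisible: "window_divisible ?E" "window_divisible (ibp_transpose E)"
    using assms by (auto simp: ibp_transpose_def intro!: window_divisible_dexpr_deriv)
  have h': "h' y = u y * (dexpr_eval G B (dexpr_deriv ?E) y
      + 2 * pi * \<i> * of_real s * B 0 y * dexpr_eval G B ?E y) * ?c" for y
  proof (cases "y \<in> ball x 2")
    case True
    then show ?thesis
      using B_nonzero[OF True] s_nonzero by (simp add: h'_def ibp_transpose_def field_simps)
  next
    case False
    then have "y \<notin> cball x 1"
      by auto
    then show ?thesis
      using dexpr_eval_eq_0_outside window_divisible_dexpr_deriv divisible assms by (simp add: h'_def)
  qed
  have "(LINT y|lborel. h' y) = 0"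
  proof (rule integral_derivative_along_line_eq_0[where e=e and c=x and R=1])
    show "((\<lambda>t. h (y + t *\<^sub>R e)) has_vector_derivative h' y) (at 0)" for y
      unfolding h_def h' by (intro has_vector_derivative_mult_left has_vector_derivative_integrand divisible)
    show "continuous_on UNIV h"
      unfolding h_def by (intro continuous_on_mult_right continuous_on_integrand divisible)
    show "continuous_on UNIV h'"
      unfolding h'_def by (intro continuous_on_diff continuous_on_mult_right continuous_on_integrand
          divisible assms)
    show "h y = 0" if "y \<notin> cball x 1" for y
      using dexpr_eval_eq_0_outside[OF divisible(1) that] by (simp add: h_def)
    show "h' y = 0" if "y \<notin> cball x 1" for y
      using dexpr_eval_eq_0_outside[OF divisible(2) that] dexpr_eval_eq_0_outside[OF assms that]
      by (simp add: h'_def)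
  qed
  moreover have "(LINT y|lborel. h' y) = (LINT y|lborel. u y * dexpr_eval G B E y)
      - (1 / s) * (LINT y|lborel. u y * dexpr_eval G B (ibp_transpose E) y)"
    unfolding h'_def using integrable_integrand[OF assms] integrable_integrand[OF divisible(2)]
    by (simp add: integral_mult_left_zero)
  ultimately show ?thesis
    by simp
qed

lemma integral_ibp_transpose_power:
  "(LINT y|lborel. u y * G 0 y)
     = (1 / s) ^ j * (LINT y|lborel. u y * dexpr_eval G B ((ibp_transpose ^^ j) (Win 0)) y)"
proof (induction j)
  case (Suc j)
  then show ?case
    using integral_ibp_transpose[OF window_divisible_ibp_transpose_power[of j]] by simp
qed simp

lemma norm_integral_le:
  assumes "\<And>y. norm (u y) \<le> 1"
    and "\<And>r y. y \<in> cball x 1 \<Longrightarrow> norm (G r y) \<le> CG r"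
    and "\<And>r y. y \<in> cball x 1 \<Longrightarrow> norm (B r y) \<le> CB r"
    and "\<And>y. y \<in> cball x 1 \<Longrightarrow> c \<le> norm (B 0 y)" and "0 < c"
  shows "norm (LINT y|lborel. u y * G 0 y)
      \<le> dexpr_bound CG CB c ((ibp_transpose ^^ j) (Win 0)) * measure lborel (cball x 1) / \<bar>s\<bar> ^ j"
proof -
  let ?E = "(ibp_transpose ^^ j) (Win 0)"
  let ?C = "dexpr_bound CG CB c ?E"
  have pointwise: "norm (u y * dexpr_eval G B ?E y) \<le> ?C * indicator (cball x 1) y" for y
  proof (cases "y \<in> cball x 1")
    case True
    have "norm (dexpr_eval G B ?E y) \<le> ?C"
      using assms True by (intro norm_dexpr_eval_le) auto
    then have "norm (u y) * norm (dexpr_eval G B ?E y) \<le> ?C"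
      using assms(1)[of y] by (meson mult_left_le_one_le norm_ge_zero order_trans)
    then show ?thesis
      using True by (simp add: norm_mult)
  next
    case False
    then show ?thesis
      using dexpr_eval_eq_0_outside[OF window_divisible_ibp_transpose_power] by simp
  qed
  have finite_ball: "emeasure lborel (cball x 1) < \<infinity>"
    using emeasure_compact_finite[of "cball x 1"] by (simp add: less_top)
  have "norm (LINT y|lborel. u y * dexpr_eval G B ?E y) \<le> (LINT y|lborel. ?C * indicator (cball x 1) y)"
    using integrable_integrand[OF window_divisible_ibp_transpose_power] finite_ball pointwise
    by (intro order_trans[OF integral_norm_bound] integral_mono integrable_norm
        integrable_mult_right integrable_real_indicator) auto
  also have "\<dots> = ?C * measure lborel (cball x 1)"
    using finite_ball by simp
  finally have "norm (LINT y|lborel. u y * dexpr_eval G B ?E y) \<le> ?C * measure lborel (cball x 1)" .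
  moreover have "norm (LINT y|lborel. u y * G 0 y) = norm (LINT y|lborel. u y * dexpr_eval G B ?E y) / \<bar>s\<bar> ^ j"
    using integral_ibp_transpose_power[of j] by (simp add: norm_divide norm_power power_one_over)
  ultimately show ?thesis
    by (simp add: divide_right_mono)
qed

end

section \<open>The Japanese bracket\<close>

lemma japanese_ge_1: "1 \<le> japanese x"
  unfolding japanese_def by simp

lemma japanese_pos: "0 < japanese x"
  using japanese_ge_1[of x] by linarith

lemma norm_le_japanese: "norm x \<le> japanese x"
  unfolding japanese_def by (simp add: real_le_rsqrt)

lemma japanese_le_1_plus_norm: "japanese x \<le> 1 + norm x"
proof -
  have "1 + (norm x)\<^sup>2 \<le> (1 + norm x)\<^sup>2"
    by (simp add: power2_eq_square algebra_simps)
  then have "sqrt (1 + (norm x)\<^sup>2) \<le> sqrt ((1 + norm x)\<^sup>2)"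
    by (rule real_sqrt_le_mono)
  then show ?thesis
    unfolding japanese_def by simp
qed

lemma japanese_le_4_japanese: "norm (z - x) \<le> 2 \<Longrightarrow> japanese z \<le> 4 * japanese x"
  using japanese_le_1_plus_norm[of z] norm_le_japanese[of x] japanese_ge_1[of x]
    norm_triangle_sub[of z x] by linarith

lemma japanese_powr_le_rpow:
  assumes "2 \<le> m"
  shows "japanese x powr (m - 2) \<le> 2 powr (m - 2) * max 1 (rpow (norm x) (m - 2))"
proof (cases "1 \<le> norm x")
  case True
  have "japanese x powr (m - 2) \<le> (2 * norm x) powr (m - 2)"
    using japanese_le_1_plus_norm[of x] True assms japanese_pos[of x] by (intro powr_mono2) auto
  also have "\<dots> = 2 powr (m - 2) * rpow (norm x) (m - 2)"
    using True by (auto simp: powr_mult rpow_def)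
  also have "\<dots> \<le> 2 powr (m - 2) * max 1 (rpow (norm x) (m - 2))"
    by (intro mult_left_mono) auto
  finally show ?thesis .
next
  case False
  then have "japanese x \<le> 2"
    using japanese_le_1_plus_norm[of x] by linarith
  then have "japanese x powr (m - 2) \<le> 2 powr (m - 2)"
    using assms japanese_pos[of x] by (intro powr_mono2) auto
  also have "\<dots> \<le> 2 powr (m - 2) * max 1 (rpow (norm x) (m - 2))"
    using mult_left_mono[OF max.cobounded1[of 1 "rpow (norm x) (m - 2)"], of "2 powr (m - 2)"] by simp
  finally show ?thesis .
qed

lemma power_decay_le_japanese_decay:
  assumes "0 \<le> N" and "N \<le> real j" and "1 \<le> norm \<eta>"
  shows "1 / norm \<eta> ^ j \<le> 2 powr N * japanese \<eta> powr (- N)"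
proof -
  have "0 < norm \<eta>"
    using assms(3) by linarith
  then have "1 / norm \<eta> ^ j = norm \<eta> powr (- real j)"
    by (simp add: powr_minus powr_realpow divide_inverse)
  also have "\<dots> \<le> norm \<eta> powr (- N)"
    using assms by (intro powr_mono) auto
  also have "\<dots> = 2 powr N * (2 * norm \<eta>) powr (- N)"
    using assms(3) by (simp add: powr_mult powr_minus field_simps)
  also have "\<dots> \<le> 2 powr N * japanese \<eta> powr (- N)"
    using japanese_le_1_plus_norm[of \<eta>] japanese_pos[of \<eta>] assms
    by (intro mult_left_mono powr_mono2') auto
  finally show ?thesis .
qed

lemma bounded_le_japanese_decay:
  assumes "0 \<le> N" and "norm \<eta> \<le> A"
  shows "1 \<le> (1 + A) powr N * japanese \<eta> powr (- N)"
proof -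
  have "japanese \<eta> \<le> 1 + A"
    using japanese_le_1_plus_norm[of \<eta>] assms(2) by linarith
  then have "(1 + A) powr (- N) \<le> japanese \<eta> powr (- N)"
    using assms(1) japanese_pos[of \<eta>] by (intro powr_mono2') auto
  moreover have "(1 + A) powr N * (1 + A) powr (- N) = 1"
    using japanese_pos[of \<eta>] \<open>japanese \<eta> \<le> 1 + A\<close> by (simp add: powr_add[symmetric])
  ultimately show ?thesis
    by (metis mult_left_mono powr_ge_zero)
qed

lemma le_japanese_decay_of_two_regimes:
  assumes N: "0 \<le> N" "N \<le> real j" and A: "1 \<le> A" and "0 \<le> C1" "0 \<le> I"
    and small: "V \<le> I" and large: "A \<le> norm \<eta> \<Longrightarrow> V \<le> C1 / norm \<eta> ^ j"
  shows "V \<le> (C1 * 2 powr N + I * (1 + A) powr N) * japanese \<eta> powr (- N)"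
proof (cases "A \<le> norm \<eta>")
  case True
  have "V \<le> C1 * (1 / norm \<eta> ^ j)"
    using large True by simp
  also have "\<dots> \<le> C1 * (2 powr N * japanese \<eta> powr (- N))"
    using power_decay_le_japanese_decay[OF N, of \<eta>] True A \<open>0 \<le> C1\<close>
    by (intro mult_left_mono) simp_all
  also have "\<dots> \<le> (C1 * 2 powr N + I * (1 + A) powr N) * japanese \<eta> powr (- N)"
    using \<open>0 \<le> I\<close> by (simp add: algebra_simps)
  finally show ?thesis .
next
  case False
  have "V \<le> I * ((1 + A) powr N * japanese \<eta> powr (- N))"
    using small mult_left_mono[OF bounded_le_japanese_decay[OF N(1), of \<eta> A] \<open>0 \<le> I\<close>] False by simp
  also have "\<dots> \<le> (C1 * 2 powr N + I * (1 + A) powr N) * japanese \<eta> powr (- N)"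
    using \<open>0 \<le> C1\<close> by (simp add: algebra_simps)
  finally show ?thesis .
qed

section \<open>Non-stationary phase for symbols of order \<open>m\<close>\<close>

lemma norm_stft_unimodular_le:
  fixes g F :: "real^'n::finite \<Rightarrow> complex"
  assumes "(\<lambda>y. norm (g y)) \<in> borel_measurable borel" and "\<And>y. norm (F y) = 1"
  shows "norm (stft g F x \<xi>) \<le> (LINT y|lborel. norm (g y))"
proof -
  have "norm (stft g F x \<xi>)
      \<le> (LINT y|lborel. norm (exp (- 2 * pi * \<i> * complex_of_real (\<xi> \<bullet> y)) * F y * cnj (g (y - x))))"
    unfolding stft_def by (rule integral_norm_bound)
  also have "\<dots> = (LINT y|lborel. norm (g (y + (- x))))"
    using assms(2) by (intro Bochner_Integration.integral_cong) (auto simp: norm_mult norm_exp_eq_Re)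
  also have "\<dots> = (LINT y|lborel. norm (g y))"
    using assms(1) by (rule lborel_integral_translate)
  finally show ?thesis .
qed

lemma has_vector_derivative_exp_2pi_i:
  assumes "(\<phi> has_real_derivative \<phi>') (at t)"
  shows "((\<lambda>t. exp (2 * pi * \<i> * complex_of_real (\<phi> t))) has_vector_derivative
      exp (2 * pi * \<i> * complex_of_real (\<phi> t)) * (2 * pi * \<i> * complex_of_real \<phi>')) (at t)"
proof -
  have "((\<lambda>z. exp (2 * pi * \<i> * z)) has_field_derivative
      exp (2 * pi * \<i> * complex_of_real (\<phi> t)) * (2 * pi * \<i>)) (at (complex_of_real (\<phi> t)))"
    by (auto intro!: derivative_eq_intros)
  from field_vector_diff_chain_at[OF has_vector_derivative_of_real[OF assms] this]
  show ?thesis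
    by (simp add: o_def mult_ac)
qed

lemma exists_dominant_coordinate:
  fixes v :: "real^'n::finite"
  obtains k where "norm v \<le> real CARD('n) * \<bar>v $ k\<bar>"
proof -
  have "Max (range (\<lambda>i. \<bar>v $ i\<bar>)) \<in> range (\<lambda>i. \<bar>v $ i\<bar>)"
    by (rule Max_in) auto
  then obtain k where k: "Max (range (\<lambda>i. \<bar>v $ i\<bar>)) = \<bar>v $ k\<bar>"
    by blast
  have "norm v \<le> (\<Sum>i\<in>UNIV. \<bar>v $ i\<bar>)"
    by (rule norm_le_l1_cart)
  also have "\<dots> \<le> (\<Sum>i\<in>(UNIV :: 'n set). \<bar>v $ k\<bar>)"
    by (intro sum_mono) (auto simp flip: k)
  finally show thesis
    using that by simp
qed

definition window_derivs :: "(real^'n::finite \<Rightarrow> complex) \<Rightarrow> real^'n \<Rightarrow> 'n \<Rightarrow> nat \<Rightarrow> real^'n \<Rightarrow> complex"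
  where "window_derivs g x k r y = cnj (pderivs (replicate r k) g (y - x))"

locale symbol_phase =
  fixes m :: real and \<mu> :: "real^'n::finite \<Rightarrow> real" and B\<mu> :: "nat \<Rightarrow> real"
  assumes m_ge_2: "2 \<le> m"
    and smooth: "smooth_fun \<mu>"
    and symbol_bound: "\<And>js x. \<bar>pderivs js \<mu> x\<bar> \<le> B\<mu> (length js) * japanese x powr (m - real (length js))"
    and symbol_bound_nonneg: "\<And>n. 0 \<le> B\<mu> n"
begin

lemma pderivs_le_near:
  assumes "2 \<le> length js" and "y \<in> ball x 2"
  shows "\<bar>pderivs js \<mu> y\<bar> \<le> B\<mu> (length js) * 4 powr (m - 2) * japanese x powr (m - 2)"
proof -
  have "\<bar>pderivs js \<mu> y\<bar> \<le> B\<mu> (length js) * japanese y powr (m - real (length js))"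
    by (rule symbol_bound)
  also have "\<dots> \<le> B\<mu> (length js) * japanese y powr (m - 2)"
    using assms(1) japanese_ge_1[of y] by (intro mult_left_mono powr_mono symbol_bound_nonneg) auto
  also have "\<dots> \<le> B\<mu> (length js) * (4 * japanese x) powr (m - 2)"
    using japanese_le_4_japanese[of y x] assms(2) m_ge_2 japanese_pos[of y]
    by (intro mult_left_mono powr_mono2 symbol_bound_nonneg) (auto simp: dist_norm norm_minus_commute)
  also have "\<dots> = B\<mu> (length js) * 4 powr (m - 2) * japanese x powr (m - 2)"
    using japanese_pos[of x] by (simp add: powr_mult)
  finally show ?thesis .
qed

definition oscillation_const :: real
  where "oscillation_const = 2 * real CARD('n) * B\<mu> 2 * 4 powr (m - 2)"

definition nonstationary_const :: real
  where "nonstationary_const = 2 * real CARD('n) * oscillation_const + 1"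

lemma nonstationary_const_ge_1: "1 \<le> nonstationary_const"
  unfolding nonstationary_const_def oscillation_const_def using symbol_bound_nonneg[of 2] by simp

lemma partial_deriv_oscillation:
  assumes "z \<in> ball x 2"
  shows "\<bar>partial_deriv k \<mu> z - partial_deriv k \<mu> x\<bar> \<le> oscillation_const * japanese x powr (m - 2)"
proof -
  let ?f = "partial_deriv k \<mu>"
  let ?F = "\<lambda>w. frechet_derivative ?f (at w)"
  let ?M = "real CARD('n) * (B\<mu> 2 * 4 powr (m - 2) * japanese x powr (m - 2))"
  have der: "(?f has_derivative ?F w) (at w within ball x 2)" for w
    using smooth_fun_differentiable[OF smooth, of "[k]" w, THEN frechet_derivative_works[THEN iffD1]]
    by (simp add: has_derivative_at_withinI)
  have "onorm (?F w) \<le> ?M" if "w \<in> ball x 2" for w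
  proof -
    have "onorm (?F w) \<le> (\<Sum>b\<in>Basis. norm (?F w b))"
      using der[of w] has_derivative_bounded_linear by (blast intro: onorm_componentwise)
    also have "\<dots> \<le> (\<Sum>b\<in>(Basis :: (real^'n) set). B\<mu> 2 * 4 powr (m - 2) * japanese x powr (m - 2))"
    proof (rule sum_mono)
      fix b :: "real^'n" assume "b \<in> Basis"
      then obtain i where "b = axis i 1"
        using axis_inverse by blast
      then have "?F w b = pderivs [i, k] \<mu> w"
        by (simp add: partial_deriv_def)
      then show "norm (?F w b) \<le> B\<mu> 2 * 4 powr (m - 2) * japanese x powr (m - 2)"
        using pderivs_le_near[of "[i, k]" w x] that by (simp add: numeral_2_eq_2)
    qed
    also have "\<dots> = ?M"
      by simp
    finally show ?thesis .
  qed
  then have "norm (?f z - ?f x) \<le> ?M * norm (z - x)"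
    using differentiable_bound[OF convex_ball der _ assms, of ?M x] by auto
  also have "\<dots> \<le> ?M * 2"
    using assms symbol_bound_nonneg[of 2]
    by (intro mult_left_mono) (auto simp: dist_norm norm_minus_commute)
  finally show ?thesis
    by (simp add: oscillation_const_def mult_ac)
qed

lemma phase_derivative_bounds:
  assumes L: "nonstationary_const * japanese x powr (m - 2) \<le> norm (\<xi> - grad \<mu> x)"
    and k: "norm (\<xi> - grad \<mu> x) \<le> real CARD('n) * \<bar>(\<xi> - grad \<mu> x) $ k\<bar>"
    and y: "y \<in> ball x 2"
  shows "norm (\<xi> - grad \<mu> x) / (2 * real CARD('n)) \<le> \<bar>partial_deriv k \<mu> y - \<xi> $ k\<bar>"
    and "\<bar>partial_deriv k \<mu> y - \<xi> $ k\<bar> \<le> 2 * norm (\<xi> - grad \<mu> x)"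
proof -
  define s where "s = norm (\<xi> - grad \<mu> x)"
  define D where "D = real CARD('n)"
  have D: "1 \<le> D"
    by (simp add: D_def Suc_le_eq)
  have "2 * D * (oscillation_const * japanese x powr (m - 2)) \<le> s"
    using L unfolding s_def D_def nonstationary_const_def
    by (simp add: algebra_simps) (use powr_ge_zero[of "japanese x" "m - 2"] in linarith)
  moreover have "2 * D * \<bar>partial_deriv k \<mu> y - partial_deriv k \<mu> x\<bar>
      \<le> 2 * D * (oscillation_const * japanese x powr (m - 2))"
    using partial_deriv_oscillation[OF y, of k] D by (intro mult_left_mono) auto
  ultimately have "2 * D * \<bar>partial_deriv k \<mu> y - partial_deriv k \<mu> x\<bar> \<le> s"
    by linarith
  then have close: "\<bar>partial_deriv k \<mu> y - partial_deriv k \<mu> x\<bar> \<le> s / (2 * D)"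
    using D by (simp add: field_simps)
  have "(\<xi> - grad \<mu> x) $ k = \<xi> $ k - partial_deriv k \<mu> x"
    by (simp add: grad_def)
  moreover have "s / D \<le> \<bar>(\<xi> - grad \<mu> x) $ k\<bar>"
    using k D by (simp add: s_def D_def field_simps)
  moreover have "\<bar>(\<xi> - grad \<mu> x) $ k\<bar> \<le> s"
    unfolding s_def by (rule component_le_norm_cart)
  moreover have "s / (2 * D) = s / D - s / (2 * D)"
    by (simp add: field_simps)
  moreover have "s / (2 * D) \<le> s"
    using divide_left_mono[of 1 "2 * D" s] D by (simp add: s_def)
  ultimately show "s / (2 * D) \<le> \<bar>partial_deriv k \<mu> y - \<xi> $ k\<bar>"
    and "\<bar>partial_deriv k \<mu> y - \<xi> $ k\<bar> \<le> 2 * s"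
    using close by linarith+
qed

definition modulated_chirp :: "real^'n \<Rightarrow> real^'n \<Rightarrow> complex"
  where "modulated_chirp \<xi> y = exp (2 * pi * \<i> * complex_of_real (\<mu> y - \<xi> \<bullet> y))"

definition phase_derivs :: "real^'n \<Rightarrow> 'n \<Rightarrow> real \<Rightarrow> nat \<Rightarrow> real^'n \<Rightarrow> complex"
  where "phase_derivs \<xi> k s r y =
    complex_of_real ((pderivs (replicate (Suc r) k) \<mu> y - (if r = 0 then \<xi> $ k else 0)) / s)"

definition phase_bound :: "nat \<Rightarrow> real"
  where "phase_bound r = (if r = 0 then 2 else B\<mu> (Suc r) * 4 powr (m - 2))"

lemma phase_derivs_bounds:
  assumes L: "nonstationary_const * japanese x powr (m - 2) \<le> norm (\<xi> - grad \<mu> x)"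
    and k: "norm (\<xi> - grad \<mu> x) \<le> real CARD('n) * \<bar>(\<xi> - grad \<mu> x) $ k\<bar>"
    and y: "y \<in> ball x 2" and "\<xi> \<noteq> grad \<mu> x"
  shows "norm (phase_derivs \<xi> k (norm (\<xi> - grad \<mu> x)) r y) \<le> phase_bound r"
    and "1 / (2 * real CARD('n)) \<le> norm (phase_derivs \<xi> k (norm (\<xi> - grad \<mu> x)) 0 y)"
proof -
  define s where "s = norm (\<xi> - grad \<mu> x)"
  have s: "0 < s"
    using \<open>\<xi> \<noteq> grad \<mu> x\<close> by (simp add: s_def)
  have "phase_derivs \<xi> k s 0 y = complex_of_real ((partial_deriv k \<mu> y - \<xi> $ k) / s)"
    by (simp add: phase_derivs_def)
  then have B0: "norm (phase_derivs \<xi> k s 0 y) = \<bar>partial_deriv k \<mu> y - \<xi> $ k\<bar> / s"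
    using s by (simp only: norm_of_real) simp
  note bounds = phase_derivative_bounds[OF L k y, folded s_def]
  show "1 / (2 * real CARD('n)) \<le> norm (phase_derivs \<xi> k s 0 y)"
    unfolding B0 using divide_right_mono[OF bounds(1), of s] s by simp
  show "norm (phase_derivs \<xi> k s r y) \<le> phase_bound r"
  proof (cases r)
    case 0
    then show ?thesis
      using divide_right_mono[OF bounds(2), of s] s by (simp add: B0 phase_bound_def)
  next
    case (Suc r')
    have "1 * japanese x powr (m - 2) \<le> nonstationary_const * japanese x powr (m - 2)"
      using nonstationary_const_ge_1 by (intro mult_right_mono) auto
    then have "japanese x powr (m - 2) \<le> s"
      using L by (simp add: s_def)
    moreover have "\<bar>pderivs (replicate (Suc r) k) \<mu> y\<bar>
        \<le> B\<mu> (Suc r) * 4 powr (m - 2) * japanese x powr (m - 2)"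
      using pderivs_le_near[of "replicate (Suc r) k" y x] y Suc by simp
    ultimately have "\<bar>pderivs (replicate (Suc r) k) \<mu> y\<bar> \<le> B\<mu> (Suc r) * 4 powr (m - 2) * s"
      using symbol_bound_nonneg[of "Suc r"] by (smt (verit) mult_left_mono mult_nonneg_nonneg powr_ge_zero)
    then show ?thesis
      using s Suc by (simp add: phase_derivs_def phase_bound_def norm_divide divide_le_eq)
  qed
qed

lemma modulated_chirp_has_vector_derivative:
  "((\<lambda>t. modulated_chirp \<xi> (y + t *\<^sub>R axis k 1)) has_vector_derivative
    modulated_chirp \<xi> y * (2 * pi * \<i> * complex_of_real (partial_deriv k \<mu> y - \<xi> $ k))) (at 0)"
proof -
  have "((\<lambda>t. \<mu> (y + t *\<^sub>R axis k 1)) has_real_derivative partial_deriv k \<mu> y) (at 0)"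
    using pderivs_has_vector_derivative_axis[OF smooth, of "[]" y k]
    by (simp add: has_real_derivative_iff_has_vector_derivative)
  moreover have "((\<lambda>t. \<xi> \<bullet> (y + t *\<^sub>R axis k 1)) has_real_derivative \<xi> $ k) (at 0)"
    by (auto intro!: derivative_eq_intros simp: inner_add_right inner_axis)
  ultimately have "((\<lambda>t. \<mu> (y + t *\<^sub>R axis k 1) - \<xi> \<bullet> (y + t *\<^sub>R axis k 1)) has_real_derivative
      partial_deriv k \<mu> y - \<xi> $ k) (at 0)"
    by (rule DERIV_diff)
  from has_vector_derivative_exp_2pi_i[OF this]
  show ?thesis
    by (simp add: modulated_chirp_def)
qed

lemma phase_derivs_has_vector_derivative:
  assumes "s \<noteq> 0"
  shows "((\<lambda>t. phase_derivs \<xi> k s r (y + t *\<^sub>R axis k 1)) has_vector_derivative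
    phase_derivs \<xi> k s (Suc r) y) (at 0)"
proof -
  have "((\<lambda>t. pderivs (replicate (Suc r) k) \<mu> (y + t *\<^sub>R axis k 1)) has_real_derivative
      pderivs (k # replicate (Suc r) k) \<mu> y) (at 0)"
    using pderivs_has_vector_derivative_axis[OF smooth, of "replicate (Suc r) k" y k]
    by (simp only: has_real_derivative_iff_has_vector_derivative)
  then have "((\<lambda>t. (pderivs (replicate (Suc r) k) \<mu> (y + t *\<^sub>R axis k 1) - (if r = 0 then \<xi> $ k else 0)) / s)
      has_real_derivative (pderivs (replicate (Suc (Suc r)) k) \<mu> y - (if Suc r = 0 then \<xi> $ k else 0)) / s)
      (at 0)"
    using assms by (auto intro!: derivative_eq_intros)
  from has_vector_derivative_of_real[OF this]
  show ?thesis
    unfolding phase_derivs_def .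
qed

lemma oscillatory_ibp_chirp:
  assumes g: "smooth_fun g" "\<And>y. g y \<noteq> 0 \<Longrightarrow> norm y \<le> 1" and s: "0 < s"
    and nonstationary: "\<And>y. y \<in> ball x 2 \<Longrightarrow> phase_derivs \<xi> k s 0 y \<noteq> 0"
  shows "oscillatory_ibp (modulated_chirp \<xi>) (window_derivs g x k) (phase_derivs \<xi> k s) x (axis k 1) s"
proof
  show "((\<lambda>t. modulated_chirp \<xi> (y + t *\<^sub>R axis k 1)) has_vector_derivative
      modulated_chirp \<xi> y * (2 * pi * \<i> * of_real s * phase_derivs \<xi> k s 0 y)) (at 0)" for y
    using modulated_chirp_has_vector_derivative[of \<xi> y k] s by (simp add: phase_derivs_def mult.assoc)
  show "((\<lambda>t. window_derivs g x k r (y + t *\<^sub>R axis k 1)) has_vector_derivative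
      window_derivs g x k (Suc r) y) (at 0)" for r y
    using has_vector_derivative_cnj[OF pderivs_has_vector_derivative_axis[OF g(1), of "replicate r k" "y - x" k]]
    by (simp add: window_derivs_def algebra_simps)
  show "continuous_on UNIV (modulated_chirp \<xi>)"
    unfolding modulated_chirp_def
    using smooth_fun_continuous_on[OF smooth, of UNIV "[]"] by (auto intro!: continuous_intros)
  show "continuous_on UNIV (window_derivs g x k r)" for r
    unfolding window_derivs_def
    by (intro continuous_intros continuous_on_compose2[OF smooth_fun_continuous_on[OF g(1)]]) auto
  show "continuous_on UNIV (phase_derivs \<xi> k s r)" for r
    unfolding phase_derivs_def using s
    by (intro continuous_intros continuous_on_compose2[OF smooth_fun_continuous_on[OF smooth]]) auto
  show "window_derivs g x k r y = 0" if "y \<notin> cball x 1" for r y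
    using that pderivs_eq_0_outside[of g 1 "y - x"] g(2)
    by (simp add: window_derivs_def dist_norm norm_minus_commute)
qed (use nonstationary s phase_derivs_has_vector_derivative in auto)

lemma norm_stft_chirp_le:
  assumes g: "smooth_fun g" "\<And>y. g y \<noteq> 0 \<Longrightarrow> norm y \<le> 1"
    "\<And>js y. norm (pderivs js g y) \<le> Cg (length js)"
    and L: "nonstationary_const * japanese x powr (m - 2) \<le> norm (\<xi> - grad \<mu> x)"
    and "\<xi> \<noteq> grad \<mu> x"
  shows "norm (stft g (\<lambda>y. exp (2 * pi * \<i> * complex_of_real (\<mu> y))) x \<xi>)
    \<le> dexpr_bound Cg phase_bound (1 / (2 * real CARD('n))) ((ibp_transpose ^^ j) (Win 0))
      * unit_ball_vol CARD('n) / norm (\<xi> - grad \<mu> x) ^ j"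
proof -
  define s where "s = norm (\<xi> - grad \<mu> x)"
  obtain k where k: "s \<le> real CARD('n) * \<bar>(\<xi> - grad \<mu> x) $ k\<bar>"
    unfolding s_def by (rule exists_dominant_coordinate)
  have s: "0 < s"
    using \<open>\<xi> \<noteq> grad \<mu> x\<close> by (simp add: s_def)
  note phase = phase_derivs_bounds[OF L k[unfolded s_def] _ \<open>\<xi> \<noteq> grad \<mu> x\<close>, folded s_def]
  interpret oscillatory_ibp "modulated_chirp \<xi>" "window_derivs g x k" "phase_derivs \<xi> k s" x "axis k 1" s
    using phase(2) s by (intro oscillatory_ibp_chirp g(1,2)) force+
  have "stft g (\<lambda>y. exp (2 * pi * \<i> * complex_of_real (\<mu> y))) x \<xi>
      = (LINT y|lborel. modulated_chirp \<xi> y * window_derivs g x k 0 y)"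
    unfolding stft_def modulated_chirp_def window_derivs_def
    by (intro Bochner_Integration.integral_cong) (simp_all add: exp_diff exp_minus field_simps)
  also have "norm \<dots> \<le> dexpr_bound Cg phase_bound (1 / (2 * real CARD('n))) ((ibp_transpose ^^ j) (Win 0))
      * measure lborel (cball x 1) / \<bar>s\<bar> ^ j"
  proof (rule norm_integral_le)
    show "norm (window_derivs g x k r y) \<le> Cg r" for r y
      using g(3)[of "replicate r k"] by (simp add: window_derivs_def)
  qed (use phase s in \<open>auto simp: modulated_chirp_def\<close>)
  finally show ?thesis
    using s by (simp add: s_def content_cball)
qed


definition decay_threshold :: real
  where "decay_threshold = nonstationary_const * 2 powr (m - 2) + 1"

lemma decay_threshold_ge_2: "2 \<le> decay_threshold"
proof -
  have "1 * 1 \<le> nonstationary_const * 2 powr (m - 2)"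
    using nonstationary_const_ge_1 m_ge_2 by (intro mult_mono ge_one_powr_ge_zero) auto
  then show ?thesis
    by (simp add: decay_threshold_def)
qed

lemma nonstationary_above_threshold:
  assumes "decay_threshold * rpow (norm x) (m - 2) \<le> norm \<eta>" and "decay_threshold \<le> norm \<eta>"
  shows "nonstationary_const * japanese x powr (m - 2) \<le> norm \<eta>"
proof -
  have "nonstationary_const * japanese x powr (m - 2)
      \<le> nonstationary_const * (2 powr (m - 2) * max 1 (rpow (norm x) (m - 2)))"
    using japanese_powr_le_rpow[OF m_ge_2, of x] nonstationary_const_ge_1 by (intro mult_left_mono) auto
  also have "\<dots> \<le> decay_threshold * max 1 (rpow (norm x) (m - 2))"
    unfolding decay_threshold_def by (simp add: algebra_simps)
  also have "\<dots> \<le> norm \<eta>"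
    using assms by auto
  finally show ?thesis .
qed

lemma stft_chirp_decay:
  assumes g: "smooth_fun g" "\<And>y. g y \<noteq> 0 \<Longrightarrow> norm y \<le> 1"
  shows "\<exists>A>0. \<forall>N\<ge>0. \<exists>C>0. \<forall>x \<xi>.
    norm (\<xi> - grad \<mu> x) \<ge> A * rpow (norm x) (m - 2) \<longrightarrow>
    norm (stft g (\<lambda>y. exp (2 * pi * \<i> * complex_of_real (\<mu> y))) x \<xi>)
      \<le> C * japanese (\<xi> - grad \<mu> x) powr (- N)"
proof (rule exI[of _ decay_threshold], intro conjI allI impI)
  let ?V = "\<lambda>x \<xi>. norm (stft g (\<lambda>y. exp (2 * pi * \<i> * complex_of_real (\<mu> y))) x \<xi>)"
  let ?A = decay_threshold
  show "0 < ?A"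
    using decay_threshold_ge_2 by linarith
  fix N :: real assume N: "0 \<le> N"
  obtain Cg where Cg: "\<And>js y. norm (pderivs js g y) \<le> Cg (length js)"
    using bound_uniform_in_length[of "\<lambda>js y. norm (pderivs js g y)"]
      smooth_compact_support_pderivs_bounded[OF g] by blast
  define I where "I = (LINT y|lborel. norm (g y))"
  define j where "j = nat \<lceil>N\<rceil>"
  define C1 where "C1 = max 0 (dexpr_bound Cg phase_bound (1 / (2 * real CARD('n)))
    ((ibp_transpose ^^ j) (Win 0)) * unit_ball_vol CARD('n))"
  have I: "0 \<le> I"
    unfolding I_def by (intro integral_nonneg_AE) auto
  have C1: "0 \<le> C1"
    by (simp add: C1_def)
  show "\<exists>C>0. \<forall>x \<xi>. ?A * rpow (norm x) (m - 2) \<le> norm (\<xi> - grad \<mu> x) \<longrightarrow>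
      ?V x \<xi> \<le> C * japanese (\<xi> - grad \<mu> x) powr (- N)"
  proof (intro exI[of _ "C1 * 2 powr N + I * (1 + ?A) powr N + 1"] conjI allI impI)
    show "0 < C1 * 2 powr N + I * (1 + ?A) powr N + 1"
      using C1 I decay_threshold_ge_2 by (intro add_nonneg_pos add_nonneg_nonneg mult_nonneg_nonneg) auto
    fix x \<xi> :: "real^'n"
    assume hyp: "?A * rpow (norm x) (m - 2) \<le> norm (\<xi> - grad \<mu> x)"
    have "?V x \<xi> \<le> (C1 * 2 powr N + I * (1 + ?A) powr N) * japanese (\<xi> - grad \<mu> x) powr (- N)"
    proof (rule le_japanese_decay_of_two_regimes[OF N _ _ C1 I, where j = j])
      show "N \<le> real j" "1 \<le> ?A"
        using real_nat_ceiling_ge[of N] decay_threshold_ge_2 by (auto simp: j_def)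
      show "?V x \<xi> \<le> I"
        unfolding I_def using smooth_fun_continuous_on[OF g(1), of UNIV "[]"]
        by (intro norm_stft_unimodular_le borel_measurable_continuous_onI) (auto intro: continuous_intros)
      assume large: "?A \<le> norm (\<xi> - grad \<mu> x)"
      then have "\<xi> \<noteq> grad \<mu> x"
        using decay_threshold_ge_2 by auto
      from norm_stft_chirp_le[OF g Cg nonstationary_above_threshold[OF hyp large] this, of j]
      show "?V x \<xi> \<le> C1 / norm (\<xi> - grad \<mu> x) ^ j"
        unfolding C1_def by (rule order_trans) (auto intro!: divide_right_mono)
    qed
    then show "?V x \<xi> \<le> (C1 * 2 powr N + I * (1 + ?A) powr N + 1) * japanese (\<xi> - grad \<mu> x) powr (- N)"
      using powr_ge_zero[of "japanese (\<xi> - grad \<mu> x)" "- N"] unfolding distrib_right by linarith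
  qed
qed

end

lemma symbol_phase_exists:
  assumes "2 \<le> m" and "smooth_fun \<mu>"
    and "\<And>js. \<exists>B. \<forall>x. japanese x powr (real (length js) - m) * \<bar>pderivs js \<mu> x\<bar> \<le> B"
  shows "\<exists>B\<mu>. symbol_phase m \<mu> B\<mu>"
proof -
  obtain B\<mu> where B\<mu>: "\<forall>n. 0 \<le> B\<mu> n"
    "\<forall>js x. japanese x powr (real (length js) - m) * \<bar>pderivs js \<mu> x\<bar> \<le> B\<mu> (length js)"
    using bound_uniform_in_length[of "\<lambda>js x. japanese x powr (real (length js) - m) * \<bar>pderivs js \<mu> x\<bar>"]
      assms(3) by blast
  have "\<bar>pderivs js \<mu> x\<bar> \<le> B\<mu> (length js) * japanese x powr (m - real (length js))" for js x
  proof -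
    have "\<bar>pderivs js \<mu> x\<bar> = japanese x powr (m - real (length js))
        * (japanese x powr (real (length js) - m) * \<bar>pderivs js \<mu> x\<bar>)"
      using japanese_pos[of x] by (simp add: powr_add[symmetric])
    also have "\<dots> \<le> japanese x powr (m - real (length js)) * B\<mu> (length js)"
      using B\<mu>(2) by (intro mult_left_mono) auto
    finally show ?thesis
      by (simp add: mult.commute)
  qed
  then have "symbol_phase m \<mu> B\<mu>"
    using assms(1,2) B\<mu>(1) by unfold_locales auto
  then show ?thesis
    by blast
qed

theorem proposition3p2:
  fixes m :: real and \<mu> :: "real^'n::finite \<Rightarrow> real" and g :: "real^'n \<Rightarrow> complex"
  assumes hm: "m \<ge> 2"
    and h\<mu>_smooth: "smooth_fun \<mu>"
    and h\<mu>_symb: "\<And>is. \<exists>B. \<forall>x. japanese x powr (real (length is) - m) * \<bar>pderivs is \<mu> x\<bar> \<le> B"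
    and hg_smooth: "smooth_fun g"
    and hg_supp: "\<And>y. g y \<noteq> 0 \<Longrightarrow> norm y \<le> 1"
  shows "(\<forall>x \<xi>. norm (stft g (\<lambda>y. exp (2 * pi * \<i> * complex_of_real (\<mu> y))) x \<xi>)
              \<le> (LINT y|lborel. norm (g y)))
       \<and> (\<exists>A>0. \<forall>N\<ge>0. \<exists>C>0. \<forall>x \<xi>.
              norm (\<xi> - grad \<mu> x) \<ge> A * rpow (norm x) (m - 2) \<longrightarrow>
              norm (stft g (\<lambda>y. exp (2 * pi * \<i> * complex_of_real (\<mu> y))) x \<xi>)
                \<le> C * japanese (\<xi> - grad \<mu> x) powr (- N))"
proof
  show "\<forall>x \<xi>. norm (stft g (\<lambda>y. exp (2 * pi * \<i> * complex_of_real (\<mu> y))) x \<xi>)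
      \<le> (LINT y|lborel. norm (g y))"
    using smooth_fun_continuous_on[OF hg_smooth, of UNIV "[]"]
    by (intro allI norm_stft_unimodular_le borel_measurable_continuous_onI)
      (auto intro: continuous_intros)
  obtain B\<mu> where "symbol_phase m \<mu> B\<mu>"
    using symbol_phase_exists[OF hm h\<mu>_smooth h\<mu>_symb] by blast
  then show "\<exists>A>0. \<forall>N\<ge>0. \<exists>C>0. \<forall>x \<xi>.
      norm (\<xi> - grad \<mu> x) \<ge> A * rpow (norm x) (m - 2) \<longrightarrow>
      norm (stft g (\<lambda>y. exp (2 * pi * \<i> * complex_of_real (\<mu> y))) x \<xi>)
        \<le> C * japanese (\<xi> - grad \<mu> x) powr (- N)"
    by (rule symbol_phase.stft_chirp_decay[OF _ hg_smooth hg_supp])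
qed

end
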